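(* There is a one-pass streaming algorithm in the VArand model that takes as input a graph $G=(V,E)$ with $|V|=n$, $|E|=m$, a coloring $f:V\to[C]$, and a parameter $\varepsilon>0$. With high probability it correctly distinguishes between the two cases "$f$ is valid" and "$f$ is $\varepsilon$-far from valid". With high probability it uses $\widetilde{\mathcal O}\!\left(\frac{|V|}{\sqrt{\varepsilon|E|}}\right)$ space.
   Context: A coloring $f:V\to[C]$ is valid if no edge $(u,v)\in E$ has $f(u)=f(v)$. It is $\varepsilon$-far from valid if at least $\varepsilon|E|$ edges are monochromatic, i.e., have equal colors at both endpoints. The task (Conflict-Sep) is to output "valid" in the first case and "far" in the second. VArand model: the vertices are revealed one at a time, in an order chosen uniformly at random among all permutations of $V$. When a vertex $v$ is revealed, its color $f(v)$ is revealed, and then all edges from $v$ to previously revealed vertices are revealed. Colors of earlier vertices are not revealed again. "With high probability" means probability at least $1-1/n^c$ for an absolute constant $c>0$. $\widetilde{\mathcal O}$ hides polylogarithmic factors. *)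

theory Defs
  imports "HOL-Probability.Probability" "HOL-Combinatorics.Multiset_Permutations"
begin

definition is_graph :: "nat \<Rightarrow> nat set set \<Rightarrow> bool" where
  "is_graph n E \<longleftrightarrow> (\<forall>e\<in>E. e \<subseteq> {0..<n} \<and> card e = 2)"

definition mono_edges :: "(nat \<Rightarrow> nat) \<Rightarrow> nat set set \<Rightarrow> nat set set" where
  "mono_edges f E = {e \<in> E. \<exists>u v. e = {u, v} \<and> f u = f v}"

definition valid_coloring :: "(nat \<Rightarrow> nat) \<Rightarrow> nat set set \<Rightarrow> bool" where
  "valid_coloring f E \<longleftrightarrow> mono_edges f E = {}"

definition far_from_valid :: "real \<Rightarrow> (nat \<Rightarrow> nat) \<Rightarrow> nat set set \<Rightarrow> bool" where
  "far_from_valid \<epsilon> f E \<longleftrightarrow> real (card (mono_edges f E)) \<ge> \<epsilon> * real (card E)"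

text \<open>Stream elements of the VArand model: a vertex with its colour, then the edges
  from that vertex to previously revealed vertices.\<close>
datatype event = VArr nat nat | EArr nat nat

text \<open>The stream induced by a vertex order (pre = already revealed vertices, most recent first).
  Edges of a newly revealed vertex v to earlier vertices u come in order of revelation of u.\<close>
fun vstream :: "(nat \<Rightarrow> nat) \<Rightarrow> nat set set \<Rightarrow> nat list \<Rightarrow> nat list \<Rightarrow> event list" where
  "vstream f E pre [] = []"
| "vstream f E pre (v # vs) =
     (VArr v (f v) # map (\<lambda>u. EArr u v) (filter (\<lambda>u. {u, v} \<in> E) (rev pre)))
     @ vstream f E (v # pre) vs"

text \<open>A randomized one-pass streaming algorithm. Its memory is a bit string; it knows the
  parameters (n, m, C, eps) in advance.\<close>
record stream_alg =
  alg_init :: "nat \<Rightarrow> nat \<Rightarrow> nat \<Rightarrow> real \<Rightarrow> bool list pmf"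
  alg_step :: "nat \<Rightarrow> nat \<Rightarrow> nat \<Rightarrow> real \<Rightarrow> bool list \<Rightarrow> event \<Rightarrow> bool list pmf"
  alg_out  :: "nat \<Rightarrow> nat \<Rightarrow> nat \<Rightarrow> real \<Rightarrow> bool list \<Rightarrow> bool pmf"

fun exec :: "(bool list \<Rightarrow> event \<Rightarrow> bool list pmf) \<Rightarrow> event list \<Rightarrow> bool list \<Rightarrow> (bool list \<times> nat) pmf" where
  "exec st [] s = return_pmf (s, length s)"
| "exec st (e # es) s =
     bind_pmf (st s e) (\<lambda>s'. map_pmf (\<lambda>(t, k). (t, max (length s) k)) (exec st es s'))"

text \<open>Outcome distribution (answer, space): True = "valid", False = "far".
  Randomness: uniformly random vertex order plus the algorithm's own coins.\<close>
definition outcome :: "stream_alg \<Rightarrow> nat \<Rightarrow> nat set set \<Rightarrow> nat \<Rightarrow> (nat \<Rightarrow> nat) \<Rightarrow> real \<Rightarrow> (bool \<times> nat) pmf" where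
  "outcome A n E C f \<epsilon> =
     bind_pmf (pmf_of_set (permutations_of_set {0..<n})) (\<lambda>\<sigma>.
     bind_pmf (alg_init A n (card E) C \<epsilon>) (\<lambda>s0.
     bind_pmf (exec (alg_step A n (card E) C \<epsilon>) (vstream f E [] \<sigma>) s0) (\<lambda>(s, sp).
     map_pmf (\<lambda>b. (b, sp)) (alg_out A n (card E) C \<epsilon> s))))"

end

theory Submission
  imports Defs "HOL-Library.Log_Nat"
begin

text \<open>
  With \<open>m = |E|\<close>, the tester stores the first \<open>T \<approx> n ln n / sqrt (\<epsilon> m)\<close> revealed
  vertices with their colours, which takes \<open>O (T log (n + C))\<close> bits, and rejects as soon as
  an edge joins the vertex being revealed to a stored vertex of the same colour; so it never
  rejects a valid colouring. If \<open>f\<close> is \<open>\<epsilon>\<close>-far from valid, the at least \<open>\<epsilon> m\<close>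
  monochromatic edges live on a vertex set \<open>U\<close> with \<open>|U|\<^sup>2 \<ge> \<epsilon> m\<close>. Whenever the earliest
  vertex of \<open>U\<close> in the random order is among the first \<open>T\<close>, it is stored and the
  monochromatic edge to its partner, which arrives later, is detected. The first \<open>T\<close> vertices
  miss \<open>U\<close> with probability at most \<open>(1 - |U| / n)\<^sup>T \<le> exp (- |U| T / n) \<le> 1 / n\<close>.
\<close>

section \<open>Random orderings\<close>

lemma measure_bind_pmf:
  "measure_pmf.prob (bind_pmf M f) A = measure_pmf.expectation M (\<lambda>x. measure_pmf.prob (f x) A)"
  unfolding measure_pmf_bind
  by (rule measure_pmf.measure_bind[where N="count_space UNIV"])
     (auto intro!: measurable_pmf_measure1 measure_pmf.subprob_space_axioms simp: space_subprob_algebra)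

lemma prob_ge_one_minus:
  assumes "set_pmf M \<subseteq> X \<union> B"
  shows "1 - measure_pmf.prob M B \<le> measure_pmf.prob M X"
proof -
  have "measure_pmf.prob M (X \<union> B) = 1"
    using assms by (auto simp: measure_pmf.prob_eq_1 AE_measure_pmf_iff)
  then show ?thesis
    using measure_Un_le[where M = "measure_pmf M" and A = X and B = B] by simp
qed

abbreviation prob_prefix_avoids :: "'a set \<Rightarrow> nat \<Rightarrow> 'a set \<Rightarrow> real" where
  "prob_prefix_avoids A T U \<equiv>
     measure_pmf.prob (pmf_of_set (permutations_of_set A)) {\<sigma>. set (take T \<sigma>) \<inter> U = {}}"

lemma prob_prefix_avoids_Suc:
  assumes "finite A" "A \<noteq> {}"
  shows "prob_prefix_avoids A (Suc T) U = (\<Sum>x\<in>A - U. prob_prefix_avoids (A - {x}) T U) / card A"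
proof -
  have "pmf_of_set (permutations_of_set A) =
      bind_pmf (pmf_of_set A) (\<lambda>x. map_pmf ((#) x) (pmf_of_set (permutations_of_set (A - {x}))))"
    unfolding random_permutation_of_set[OF assms] map_pmf_def ..
  then have "prob_prefix_avoids A (Suc T) U =
      measure_pmf.expectation (pmf_of_set A) (\<lambda>x. if x \<in> U then 0 else prob_prefix_avoids (A - {x}) T U)"
    by (simp only: measure_bind_pmf) (auto intro!: Bochner_Integration.integral_cong)
  also have "\<dots> = (\<Sum>x\<in>A - U. prob_prefix_avoids (A - {x}) T U) / card A"
    using assms by (simp add: integral_pmf_of_set sum.If_cases Diff_eq)
  finally show ?thesis .
qed

lemma prob_prefix_avoids_le:
  assumes "finite A" "U \<subseteq> A"
  shows "prob_prefix_avoids A T U \<le> (1 - card U / card A) ^ T"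
  using assms
proof (induction T arbitrary: A)
  case 0
  then show ?case by simp
next
  case (Suc T)
  show ?case
  proof (cases "U = {}")
    case True
    then show ?thesis by simp
  next
    case False
    define a u where "a = card A" and "u = card U"
    have "A \<noteq> {}" using False Suc.prems by blast
    have u_le_a: "u \<le> a"
      unfolding a_def u_def using Suc.prems by (intro card_mono)
    have bound: "prob_prefix_avoids (A - {x}) T U \<le> (1 - u / a) ^ T" if x: "x \<in> A - U" for x
    proof -
      have card_A_x: "card (A - {x}) = a - 1"
        using x Suc.prems(1) by (simp add: a_def)
      have "u \<le> a - 1"
        unfolding u_def card_A_x[symmetric] using x Suc.prems by (intro card_mono) auto
      moreover have "u > 0"
        using False Suc.prems finite_subset unfolding u_def by fastforce
      ultimately have "0 \<le> 1 - u / (a - 1)" and "u / a \<le> u / (a - 1)"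
        by (auto simp: field_simps intro!: divide_left_mono)
      then have "(1 - u / (a - 1)) ^ T \<le> (1 - u / a) ^ T"
        by (intro power_mono) auto
      moreover have "prob_prefix_avoids (A - {x}) T U \<le> (1 - u / (a - 1)) ^ T"
        using Suc.IH[of "A - {x}"] x Suc.prems card_A_x \<open>u \<le> a - 1\<close> by (auto simp: u_def of_nat_diff)
      ultimately show ?thesis by linarith
    qed
    have "prob_prefix_avoids A (Suc T) U \<le> (\<Sum>x\<in>A - U. (1 - u / a) ^ T) / a"
      unfolding prob_prefix_avoids_Suc[OF Suc.prems(1) \<open>A \<noteq> {}\<close>] a_def[symmetric]
      by (intro divide_right_mono sum_mono bound) auto
    also have "\<dots> = (1 - u / a) ^ Suc T"
      using Suc.prems \<open>A \<noteq> {}\<close> u_le_a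
      by (simp add: card_Diff_subset finite_subset a_def u_def of_nat_diff field_simps)
    finally show ?thesis by (simp add: a_def u_def)
  qed
qed

section \<open>Fixed-width memory\<close>

definition encode_nats :: "nat \<Rightarrow> nat list \<Rightarrow> bool list" where
  "encode_nats w xs = concat (map (\<lambda>x. map (bit x) [0..<w]) xs)"

function chunks :: "nat \<Rightarrow> 'a list \<Rightarrow> 'a list list" where
  "chunks k xs = (if k = 0 \<or> xs = [] then [] else take k xs # chunks k (drop k xs))"
  by pat_completeness auto
termination by (relation "Wellfounded.measure (\<lambda>(k, xs). length xs)") auto

declare chunks.simps [simp del]

lemma chunks_concat:
  assumes "k > 0" "\<forall>xs\<in>set xss. length xs = k"
  shows "chunks k (concat xss) = xss"
  using assms by (induction xss) (subst chunks.simps, auto)+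

definition decode_nats :: "nat \<Rightarrow> bool list \<Rightarrow> nat list" where
  "decode_nats w bs = map (horner_sum of_bool 2) (chunks w bs)"

lemma length_encode_nats [simp]: "length (encode_nats w xs) = w * length xs"
  by (simp add: encode_nats_def length_concat comp_def sum_list_triv)

lemma decode_encode_nats:
  assumes "w > 0" "\<forall>x\<in>set xs. x < 2 ^ w"
  shows "decode_nats w (encode_nats w xs) = xs"
proof -
  have "chunks w (encode_nats w xs) = map (\<lambda>x. map (bit x) [0..<w]) xs"
    unfolding encode_nats_def using assms(1) by (intro chunks_concat) auto
  then show ?thesis
    using assms(2) by (simp add: decode_nats_def horner_sum_bit_eq_take_bit take_bit_nat_eq_self map_idI)
qed

definition flat_pairs :: "('a \<times> 'a) list \<Rightarrow> 'a list" where
  "flat_pairs ps = concat (map (\<lambda>(a, b). [a, b]) ps)"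

fun pairs :: "'a list \<Rightarrow> ('a \<times> 'a) list" where
  "pairs (a # b # xs) = (a, b) # pairs xs"
| "pairs _ = []"

lemma pairs_flat_pairs [simp]: "pairs (flat_pairs ps) = ps"
  by (induction ps) (auto simp: flat_pairs_def)

lemma length_flat_pairs [simp]: "length (flat_pairs ps) = 2 * length ps"
  by (induction ps) (auto simp: flat_pairs_def)

lemma set_flat_pairs: "set (flat_pairs ps) = fst ` set ps \<union> snd ` set ps"
  by (induction ps) (auto simp: flat_pairs_def)

lemma foldl_invariant:
  assumes "\<And>a e. I a \<Longrightarrow> e \<in> set es \<Longrightarrow> I (step a e)" and "I a"
  shows "I (foldl step a es)"
  using assms by (induction es arbitrary: a) auto

lemma exec_encoded:
  assumes "\<And>a e. I a \<Longrightarrow> e \<in> set es \<Longrightarrow> I (step a e)"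
    and "\<And>a. I a \<Longrightarrow> decode (encode a) = a"
    and "\<And>a. I a \<Longrightarrow> length (encode a) \<le> B"
    and "I a"
  shows "\<exists>k \<le> B. exec (\<lambda>s e. return_pmf (encode (step (decode s) e))) es (encode a)
                   = return_pmf (encode (foldl step a es), k)"
  using assms
proof (induction es arbitrary: a)
  case Nil
  then show ?case by auto
next
  case (Cons e es)
  then obtain k where "k \<le> B" and
    "exec (\<lambda>s e. return_pmf (encode (step (decode s) e))) es (encode (step a e))
       = return_pmf (encode (foldl step (step a e) es), k)"
    by (metis list.set_intros)
  then show ?case
    using Cons.prems by (intro exI[of _ "max (length (encode a)) k"]) (simp add: bind_return_pmf)
qed

lemma exec_empty_memory: "exec (\<lambda>s e. return_pmf []) es [] = return_pmf ([], 0)"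
  by (induction es) (simp_all add: bind_return_pmf)

section \<open>The tester\<close>

text \<open>A tester state consists of the rejection flag, the colour of the vertex being revealed,
  and the first \<open>T\<close> revealed vertices with their colours.\<close>

type_synonym tester_state = "bool \<times> nat \<times> (nat \<times> nat) list"

fun tester_step :: "nat \<Rightarrow> tester_state \<Rightarrow> event \<Rightarrow> tester_state" where
  "tester_step T (fl, c, ps) (VArr v c') = (fl, c', if length ps < T then ps @ [(v, c')] else ps)"
| "tester_step T (fl, c, ps) (EArr u v) = (fl \<or> (u, c) \<in> set ps, c, ps)"

fun encode_state :: "nat \<Rightarrow> tester_state \<Rightarrow> bool list" where
  "encode_state w (fl, c, ps) = fl # encode_nats w (c # flat_pairs ps)"

definition decode_state :: "nat \<Rightarrow> bool list \<Rightarrow> tester_state" where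
  "decode_state w bs = (let ns = decode_nats w (tl bs) in (hd bs, hd ns, pairs (tl ns)))"

fun state_fits :: "nat \<Rightarrow> nat \<Rightarrow> tester_state \<Rightarrow> bool" where
  "state_fits w T (fl, c, ps) \<longleftrightarrow> (\<forall>x\<in>set (c # flat_pairs ps). x < 2 ^ w) \<and> length ps \<le> T"

lemma decode_encode_state: "w > 0 \<Longrightarrow> state_fits w T a \<Longrightarrow> decode_state w (encode_state w a) = a"
  by (cases a) (simp add: decode_state_def decode_encode_nats)

lemma length_encode_state: "state_fits w T a \<Longrightarrow> length (encode_state w a) \<le> 1 + w + 2 * w * T"
  by (cases a) auto

lemma state_fits_tester_step:
  "state_fits w T a \<Longrightarrow> (\<And>v c. e = VArr v c \<Longrightarrow> v < 2 ^ w \<and> c < 2 ^ w) \<Longrightarrow>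
     state_fits w T (tester_step T a e)"
  by (cases a; cases e) (auto simp: set_flat_pairs)

lemma vstream_VArr: "VArr v c \<in> set (vstream f E pre vs) \<Longrightarrow> v \<in> set vs \<and> c = f v"
  by (induction vs arbitrary: pre) auto

definition closes_conflict :: "nat \<Rightarrow> (nat \<Rightarrow> nat) \<Rightarrow> nat set set \<Rightarrow> nat list \<Rightarrow> nat \<Rightarrow> bool" where
  "closes_conflict T f E \<sigma> j \<longleftrightarrow>
     (\<exists>i < min T j. {\<sigma> ! i, \<sigma> ! j} \<in> E \<and> f (\<sigma> ! i) = f (\<sigma> ! j))"

lemma closes_conflict_append:
  "closes_conflict T f E (xs @ v # ys) (length xs) \<longleftrightarrow>
     (\<exists>u\<in>set (take T xs). {u, v} \<in> E \<and> f u = f v)"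
proof -
  have "set (take T xs) = (\<lambda>i. xs ! i) ` {..<min T (length xs)}"
    by (force simp: in_set_conv_nth image_iff)
  then show ?thesis
    by (auto simp: closes_conflict_def nth_append)
qed

lemma in_set_take_append_single:
  "u \<in> set xs \<and> u \<in> set (take T (xs @ [v])) \<longleftrightarrow> u \<in> set (take T xs)"
  by (cases "T \<le> length xs") (auto simp: take_append dest: in_set_takeD)

lemma foldl_tester_step_edges:
  "foldl (tester_step T) (fl, c, ps) (map (\<lambda>u. EArr u v) us) =
     (fl \<or> (\<exists>u\<in>set us. (u, c) \<in> set ps), c, ps)"
  by (induction us arbitrary: fl) auto

lemma tester_flag_vstream:
  assumes "ps = map (\<lambda>v. (v, f v)) (take T (rev pre))"
  shows "fst (foldl (tester_step T) (fl, c, ps) (vstream f E pre vs)) \<longleftrightarrow>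
           fl \<or> (\<exists>j < length vs. closes_conflict T f E (rev pre @ vs) (length pre + j))"
  using assms
proof (induction vs arbitrary: pre fl c ps)
  case Nil
  then show ?case by auto
next
  case (Cons v vs)
  define ps' where "ps' = map (\<lambda>v. (v, f v)) (take T (rev pre @ [v]))"
  have step: "tester_step T (fl, c, ps) (VArr v (f v)) = (fl, f v, ps')"
    using Cons.prems by (auto simp: ps'_def take_append)
  have "(u, f v) \<in> set ps' \<longleftrightarrow> u \<in> set (take T (rev pre @ [v])) \<and> f u = f v" for u
    by (auto simp: ps'_def)
  then have new_edges: "(\<exists>u\<in>set (filter (\<lambda>u. {u, v} \<in> E) (rev pre)). (u, f v) \<in> set ps') \<longleftrightarrow>
      closes_conflict T f E (rev pre @ v # vs) (length pre)"
    using in_set_take_append_single[of _ "rev pre" T v]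
    by (auto simp: closes_conflict_append[of _ _ _ "rev pre", simplified] dest: in_set_takeD)
  have "fst (foldl (tester_step T) (fl, c, ps) (vstream f E pre (v # vs))) \<longleftrightarrow>
     fst (foldl (tester_step T) (fl \<or> closes_conflict T f E (rev pre @ v # vs) (length pre), f v, ps')
       (vstream f E (v # pre) vs))"
    by (simp only: vstream.simps foldl_append foldl_Cons step foldl_tester_step_edges new_edges)
  also have "\<dots> \<longleftrightarrow> fl \<or> closes_conflict T f E (rev pre @ v # vs) (length pre) \<or>
      (\<exists>j < length vs. closes_conflict T f E (rev pre @ v # vs) (Suc (length pre) + j))"
    by (subst Cons.IH) (simp_all add: ps'_def)
  also have "\<dots> \<longleftrightarrow> fl \<or> (\<exists>j < length (v # vs). closes_conflict T f E (rev pre @ v # vs) (length pre + j))"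
    by (auto simp: less_Suc_eq_0_disj)
  finally show ?case .
qed

lemma tester_flag_vstream_Nil:
  "fst (foldl (tester_step T) (False, c, []) (vstream f E [] \<sigma>)) \<longleftrightarrow>
     (\<exists>j < length \<sigma>. closes_conflict T f E \<sigma> j)"
  using tester_flag_vstream[where pre = "[]" and ps = "[]" and fl = False] by simp

definition word_size :: "nat \<Rightarrow> nat \<Rightarrow> nat" where
  "word_size n C = floorlog 2 (n + C)"

definition sample_size :: "nat \<Rightarrow> nat \<Rightarrow> real \<Rightarrow> nat" where
  "sample_size n m \<epsilon> = nat \<lceil>real n * ln (real n) / sqrt (\<epsilon> * real m)\<rceil>"

text \<open>For \<open>\<epsilon> > 1\<close> no colouring is \<open>\<epsilon>\<close>-far from valid,
  while the space bound may drop below one bit, so the tester then accepts without memory.\<close>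

definition conflict_tester :: stream_alg where
  "conflict_tester = \<lparr>
     alg_init = (\<lambda>n m C \<epsilon>. return_pmf
       (if 1 < \<epsilon> then [] else encode_state (word_size n C) (False, 0, []))),
     alg_step = (\<lambda>n m C \<epsilon> s e. return_pmf (if 1 < \<epsilon> then [] else
       encode_state (word_size n C)
         (tester_step (sample_size n m \<epsilon>) (decode_state (word_size n C) s) e))),
     alg_out = (\<lambda>n m C \<epsilon> s. return_pmf (1 < \<epsilon> \<or> \<not> fst (decode_state (word_size n C) s))) \<rparr>"

lemma outcome_conflict_tester_large_eps:
  "1 < \<epsilon> \<Longrightarrow> outcome conflict_tester n E C f \<epsilon> = return_pmf (True, 0)"
  by (simp add: outcome_def conflict_tester_def exec_empty_memory bind_return_pmf bind_pmf_const)

lemma word_size_bound: "x < n + C \<Longrightarrow> x < 2 ^ word_size n C"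
  using floorlog_bounds[of "n + C" 2] by (simp add: word_size_def) linarith

lemma exec_tester_encoded:
  fixes n C T :: nat and f :: "nat \<Rightarrow> nat" and E :: "nat set set" and \<sigma> :: "nat list"
  defines "w \<equiv> word_size n C" and "run \<equiv> foldl (tester_step T) (False, 0, []) (vstream f E [] \<sigma>)"
  assumes "set \<sigma> = {0..<n}" "0 < n" "\<forall>v < n. f v < C"
  shows "decode_state w (encode_state w run) = run"
    and "\<exists>k \<le> 1 + w + 2 * w * T.
      exec (\<lambda>s e. return_pmf (encode_state w (tester_step T (decode_state w s) e))) (vstream f E [] \<sigma>)
        (encode_state w (False, 0, [])) = return_pmf (encode_state w run, k)"
proof -
  have "w > 0"
    using assms(4) by (simp add: w_def word_size_def floorlog_def)
  have step_fits: "state_fits w T (tester_step T a e)"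
    if "state_fits w T a" "e \<in> set (vstream f E [] \<sigma>)" for a e
  proof -
    have "v < 2 ^ w \<and> c < 2 ^ w" if "e = VArr v c" for v c
      using vstream_VArr[of v c f E "[]" \<sigma>] \<open>e \<in> set (vstream f E [] \<sigma>)\<close> that assms(3,5)
      unfolding w_def by (force intro: word_size_bound)
    then show ?thesis
      using state_fits_tester_step[OF that(1)] by blast
  qed
  have start_fits: "state_fits w T (False, 0, [])"
    using assms(4) unfolding w_def by (simp add: flat_pairs_def word_size_bound)
  show "decode_state w (encode_state w run) = run"
    unfolding run_def using foldl_invariant[where I = "state_fits w T", OF step_fits start_fits] \<open>w > 0\<close>
    by (intro decode_encode_state)
  show "\<exists>k \<le> 1 + w + 2 * w * T.
      exec (\<lambda>s e. return_pmf (encode_state w (tester_step T (decode_state w s) e))) (vstream f E [] \<sigma>)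
        (encode_state w (False, 0, [])) = return_pmf (encode_state w run, k)"
    unfolding run_def using \<open>w > 0\<close>
    by (intro exec_encoded[where I = "state_fits w T"] step_fits decode_encode_state length_encode_state
        start_fits)
qed

lemma outcome_conflict_tester:
  assumes "\<epsilon> \<le> 1" "0 < n" "\<forall>v < n. f v < C"
  shows "\<exists>sp. outcome conflict_tester n E C f \<epsilon> =
      map_pmf (\<lambda>\<sigma>. (\<not> (\<exists>j < length \<sigma>. closes_conflict (sample_size n (card E) \<epsilon>) f E \<sigma> j), sp \<sigma>))
        (pmf_of_set (permutations_of_set {0..<n}))
    \<and> (\<forall>\<sigma>. sp \<sigma> \<le> 1 + word_size n C + 2 * word_size n C * sample_size n (card E) \<epsilon>)"
proof -
  define w T P where "w = word_size n C" and "T = sample_size n (card E) \<epsilon>"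
    and "P = permutations_of_set {0..<n}"
  define run where "run \<sigma> = foldl (tester_step T) (False, 0, []) (vstream f E [] \<sigma>)" for \<sigma>
  have set_P: "set \<sigma> = {0..<n}" if "\<sigma> \<in> P" for \<sigma>
    using that by (simp add: P_def permutations_of_setD)
  have "\<exists>k \<le> 1 + w + 2 * w * T. \<sigma> \<in> P \<longrightarrow>
      exec (\<lambda>s e. return_pmf (encode_state w (tester_step T (decode_state w s) e))) (vstream f E [] \<sigma>)
        (encode_state w (False, 0, [])) = return_pmf (encode_state w (run \<sigma>), k)" for \<sigma>
    using exec_tester_encoded(2)[OF set_P assms(2,3)] unfolding run_def w_def by (cases "\<sigma> \<in> P") auto
  then obtain sp where sp: "\<And>\<sigma>. sp \<sigma> \<le> 1 + w + 2 * w * T"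
    "\<And>\<sigma>. \<sigma> \<in> P \<Longrightarrow> exec (\<lambda>s e. return_pmf (encode_state w (tester_step T (decode_state w s) e)))
        (vstream f E [] \<sigma>) (encode_state w (False, 0, [])) = return_pmf (encode_state w (run \<sigma>), sp \<sigma>)"
    by metis
  have "outcome conflict_tester n E C f \<epsilon> = pmf_of_set P \<bind> (\<lambda>\<sigma>. return_pmf (\<not> fst (run \<sigma>), sp \<sigma>))"
    using assms(1) sp(2) exec_tester_encoded(1)[OF set_P assms(2,3)]
    unfolding outcome_def conflict_tester_def
    by (intro bind_pmf_cong) (auto simp: P_def w_def T_def run_def bind_return_pmf)
  then show ?thesis
    using sp(1) unfolding run_def map_pmf_def tester_flag_vstream_Nil P_def T_def w_def by blast
qed

section \<open>Correctness and memory\<close>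

lemma card_le_square_if_two_subsets:
  assumes "finite A" "\<And>e. e \<in> F \<Longrightarrow> e \<subseteq> A \<and> card e = 2"
  shows "card F \<le> card A ^ 2"
proof -
  have "card F \<le> card {e. e \<subseteq> A \<and> card e = 2}"
    using assms by (intro card_mono) (auto intro: finite_subset[of _ "Pow A"])
  also have "\<dots> = card A choose 2"
    using n_subsets[OF assms(1)] .
  also have "\<dots> \<le> card A ^ 2"
    by (cases "2 \<le> card A") (auto intro: binomial_le_pow simp: binomial_eq_0)
  finally show ?thesis .
qed

lemma is_graph_card_le: "is_graph n E \<Longrightarrow> card E \<le> n ^ 2"
  using card_le_square_if_two_subsets[of "{0..<n}" E] by (simp add: is_graph_def)

lemma is_graph_two_le:
  assumes "is_graph n E" "1 \<le> card E"
  shows "2 \<le> n"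
proof -
  obtain e where "e \<in> E"
    using assms(2) by fastforce
  then have "card e = 2" "e \<subseteq> {0..<n}"
    using assms(1) by (auto simp: is_graph_def)
  then show ?thesis
    using card_mono[of "{0..<n}" e] by simp
qed

lemma mono_edges_nonempty_if_closes_conflict:
  "closes_conflict T f E \<sigma> j \<Longrightarrow> mono_edges f E \<noteq> {}"
  by (auto simp: closes_conflict_def mono_edges_def)

lemma closes_conflict_if_take_meets_mono_edges:
  assumes \<sigma>: "\<sigma> \<in> permutations_of_set {0..<n}" and G: "is_graph n E"
    and hit: "set (take T \<sigma>) \<inter> \<Union>(mono_edges f E) \<noteq> {}"
  shows "\<exists>j < length \<sigma>. closes_conflict T f E \<sigma> j"
proof -
  define U where "U = \<Union>(mono_edges f E)"
  have "\<exists>i. i < T \<and> i < length \<sigma> \<and> \<sigma> ! i \<in> U"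
    using hit by (auto simp: U_def in_set_conv_nth)
  then obtain i where i: "i < T" "i < length \<sigma>" "\<sigma> ! i \<in> U" and first: "\<And>k. k < i \<Longrightarrow> \<sigma> ! k \<notin> U"
    unfolding exists_least_iff[of "\<lambda>i. i < T \<and> i < length \<sigma> \<and> \<sigma> ! i \<in> U"] by auto
  from i(3) obtain a b where ab: "{a, b} \<in> E" "f a = f b" "\<sigma> ! i \<in> {a, b}"
    by (auto simp: U_def mono_edges_def)
  then have "a \<noteq> b" using G by (fastforce simp: is_graph_def)
  with ab obtain w where w: "{\<sigma> ! i, w} \<in> E" "f (\<sigma> ! i) = f w" "w \<noteq> \<sigma> ! i"
    by (auto simp: insert_commute)
  have "w \<in> set \<sigma>"
    using w(1) G \<sigma> by (auto simp: is_graph_def permutations_of_set_def)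
  then obtain j where j: "j < length \<sigma>" "\<sigma> ! j = w"
    by (auto simp: in_set_conv_nth)
  have "w \<in> U"
    using w by (auto simp: U_def mono_edges_def)
  then have "i < j"
    using first j w(3) by (metis linorder_neqE_nat)
  then show ?thesis
    using i j w by (auto simp: closes_conflict_def)
qed

lemma prob_sample_misses_conflicts:
  assumes G: "is_graph n E" and "1 \<le> card E" "0 < \<epsilon>" and far: "far_from_valid \<epsilon> f E"
  shows "prob_prefix_avoids {0..<n} (sample_size n (card E) \<epsilon>) (\<Union>(mono_edges f E)) \<le> 1 / n"
proof -
  define U T s where "U = \<Union>(mono_edges f E)" and "T = sample_size n (card E) \<epsilon>"
    and "s = sqrt (\<epsilon> * card E)"
  have "s > 0"
    using assms by (simp add: s_def)
  have U_sub: "U \<subseteq> {0..<n}"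
    using G by (auto simp: U_def mono_edges_def is_graph_def)
  then have "finite U" "card U \<le> n"
    using finite_subset card_mono[OF _ U_sub] by auto
  have "card (mono_edges f E) \<le> card U ^ 2"
    using G \<open>finite U\<close>
    by (intro card_le_square_if_two_subsets) (auto simp: U_def mono_edges_def is_graph_def)
  then have "\<epsilon> * card E \<le> card U ^ 2"
    using far unfolding far_from_valid_def by (metis of_nat_le_iff of_nat_power order.trans)
  then have "s \<le> card U"
    unfolding s_def using real_sqrt_le_mono by fastforce
  then have "n \<ge> 1"
    using \<open>s > 0\<close> \<open>card U \<le> n\<close> by linarith
  have "1 \<le> card U / s"
    using \<open>s \<le> card U\<close> \<open>s > 0\<close> by simp
  then have "ln n \<le> card U / s * ln n"
    using mult_right_mono[of 1 "card U / s" "ln n"] \<open>n \<ge> 1\<close> by simp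
  also have "\<dots> = card U / n * (n * ln n / s)"
    using \<open>n \<ge> 1\<close> by simp
  also have "\<dots> \<le> card U / n * T"
    unfolding T_def sample_size_def s_def by (intro mult_left_mono) (linarith, simp)
  finally have exponent: "ln n \<le> card U / n * T" .
  have "prob_prefix_avoids {0..<n} T U
      \<le> (1 - card U / n) ^ T"
    using prob_prefix_avoids_le[of "{0..<n}" U T] U_sub by simp
  also have "\<dots> \<le> exp (- (card U / n)) ^ T"
    using exp_ge_add_one_self[of "- (card U / n)"] \<open>card U \<le> n\<close> \<open>n \<ge> 1\<close>
    by (intro power_mono) (simp_all add: field_simps)
  also have "\<dots> = exp (- (card U / n * T))"
    by (simp add: exp_of_nat_mult[symmetric] algebra_simps)
  also have "\<dots> \<le> exp (- ln n)"
    using exponent by simp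
  also have "\<dots> = 1 / n"
    using \<open>n \<ge> 1\<close> by (simp add: exp_minus inverse_eq_divide)
  finally show ?thesis
    unfolding U_def T_def .
qed

lemma tester_memory_bound:
  assumes "2 \<le> n" "0 < \<epsilon>" "\<epsilon> \<le> 1" "1 \<le> m" "m \<le> n ^ 2"
  shows "real (1 + word_size n C + 2 * word_size n C * sample_size n m \<epsilon>)
           \<le> 11 * log 2 (real (n + C)) ^ 2 * (real n / sqrt (\<epsilon> * real m))"
proof -
  define L s where "L = log 2 (n + C)" and "s = sqrt (\<epsilon> * m)"
  define B where "B = n / s"
  have "1 \<le> L"
    using assms(1) by (simp add: L_def)
  have "s > 0"
    using assms by (simp add: s_def)
  have "\<epsilon> * m \<le> m"
    using assms(2,3) by (simp add: mult_left_le_one_le)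
  also have "\<dots> \<le> n ^ 2"
    using assms(5) by (metis of_nat_le_iff of_nat_power)
  finally have "s \<le> n"
    unfolding s_def using real_sqrt_le_mono by fastforce
  then have "1 \<le> B"
    using \<open>s > 0\<close> by (simp add: B_def)
  have "real (word_size n C) \<le> L + 1"
    using \<open>1 \<le> L\<close> assms(1) by (simp add: word_size_def floorlog_def L_def)
  have "ln n \<le> log 2 n"
    using assms(1) ln_2_less_1 by (simp add: log_def field_simps mult_left_le_one_le)
  also have "\<dots> \<le> L"
    using assms(1) by (simp add: L_def)
  finally have "ln n * B \<le> L * B"
    using \<open>1 \<le> B\<close> by (intro mult_right_mono) auto
  then have "n * ln n / s \<le> L * B"
    by (simp add: B_def mult.commute)
  moreover have "0 \<le> n * ln n / s"
    using assms(1) \<open>s > 0\<close> by simp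
  ultimately have "real (sample_size n m \<epsilon>) \<le> L * B + 1"
    unfolding sample_size_def s_def[symmetric] by linarith
  then have "real (word_size n C) * (1 + 2 * real (sample_size n m \<epsilon>)) \<le> (L + 1) * (1 + 2 * (L * B + 1))"
    using \<open>real (word_size n C) \<le> L + 1\<close> \<open>1 \<le> L\<close> by (intro mult_mono) auto
  then have "real (1 + word_size n C + 2 * word_size n C * sample_size n m \<epsilon>)
      \<le> 1 + (L + 1) * (1 + 2 * (L * B + 1))"
    by (simp add: algebra_simps)
  also have "\<dots> \<le> 11 * L ^ 2 * B"
  proof -
    have "1 \<le> L * B" "L * B \<le> L * (L * B)" "L \<le> L * (L * B)"
      using \<open>1 \<le> L\<close> \<open>1 \<le> B\<close> mult_mono[of 1 L 1 B] by (simp_all add: mult_le_cancel_left1)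
    then show ?thesis
      by (simp add: power2_eq_square algebra_simps)
  qed
  finally show ?thesis
    by (simp add: L_def B_def s_def)
qed

lemma conflict_tester_accepts_valid:
  assumes "is_graph n E" "1 \<le> card E" "\<forall>v < n. f v < C" "valid_coloring f E"
  shows "measure_pmf.prob (outcome conflict_tester n E C f \<epsilon>) {x. fst x = True} = 1"
proof (cases "1 < \<epsilon>")
  case True
  then show ?thesis by (simp add: outcome_conflict_tester_large_eps)
next
  case False
  have "0 < n" using is_graph_two_le[OF assms(1,2)] by simp
  then obtain sp where out: "outcome conflict_tester n E C f \<epsilon> =
      map_pmf (\<lambda>\<sigma>. (\<not> (\<exists>j < length \<sigma>. closes_conflict (sample_size n (card E) \<epsilon>) f E \<sigma> j), sp \<sigma>))
        (pmf_of_set (permutations_of_set {0..<n}))"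
    using outcome_conflict_tester[of \<epsilon> n f C E] False assms(3) by auto
  have "measure_pmf.prob (pmf_of_set (permutations_of_set {0..<n}))
      {\<sigma>. \<not> (\<exists>j < length \<sigma>. closes_conflict (sample_size n (card E) \<epsilon>) f E \<sigma> j)} = 1"
    using assms(4) mono_edges_nonempty_if_closes_conflict
    by (simp add: measure_pmf.prob_eq_1 AE_measure_pmf_iff valid_coloring_def) blast
  then show ?thesis
    unfolding out by (simp add: vimage_def)
qed

lemma far_from_valid_le_one:
  assumes "far_from_valid \<epsilon> f E" "1 \<le> card E"
  shows "\<epsilon> \<le> 1"
proof -
  have "card (mono_edges f E) \<le> card E"
    using assms(2) by (intro card_mono) (auto simp: mono_edges_def intro: card_ge_0_finite)
  then have "\<epsilon> * card E \<le> 1 * real (card E)"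
    using assms(1) unfolding far_from_valid_def by linarith
  then show ?thesis
    using assms(2) by (simp add: mult_le_cancel_right)
qed

lemma conflict_tester_rejects_far:
  assumes "is_graph n E" "1 \<le> card E" "\<forall>v < n. f v < C" "0 < \<epsilon>" "far_from_valid \<epsilon> f E"
  shows "1 - 1 / n \<le> measure_pmf.prob (outcome conflict_tester n E C f \<epsilon>) {x. fst x = False}"
proof -
  define T where "T = sample_size n (card E) \<epsilon>"
  have "0 < n" using is_graph_two_le[OF assms(1,2)] by simp
  then obtain sp where out: "outcome conflict_tester n E C f \<epsilon> =
      map_pmf (\<lambda>\<sigma>. (\<not> (\<exists>j < length \<sigma>. closes_conflict T f E \<sigma> j), sp \<sigma>))
        (pmf_of_set (permutations_of_set {0..<n}))"
    using outcome_conflict_tester[of \<epsilon> n f C E] far_from_valid_le_one[OF assms(5,2)] assms(3)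
    unfolding T_def by auto
  have "set_pmf (pmf_of_set (permutations_of_set {0..<n})) \<subseteq>
      {\<sigma>. \<exists>j < length \<sigma>. closes_conflict T f E \<sigma> j} \<union> {\<sigma>. set (take T \<sigma>) \<inter> \<Union>(mono_edges f E) = {}}"
    using closes_conflict_if_take_meets_mono_edges[OF _ assms(1), of _ T f] by simp blast
  then have "1 - prob_prefix_avoids {0..<n} T (\<Union>(mono_edges f E)) \<le>
      measure_pmf.prob (pmf_of_set (permutations_of_set {0..<n})) {\<sigma>. \<exists>j < length \<sigma>. closes_conflict T f E \<sigma> j}"
    by (rule prob_ge_one_minus)
  then show ?thesis
    using prob_sample_misses_conflicts[OF assms(1,2,4,5)] unfolding out T_def by (simp add: vimage_def)
qed

lemma conflict_tester_space:
  fixes \<epsilon> :: real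
  assumes "is_graph n E" "1 \<le> card E" "\<forall>v < n. f v < C" "0 < \<epsilon>"
  shows "measure_pmf.prob (outcome conflict_tester n E C f \<epsilon>)
           {x. real (snd x) \<le> 11 * log 2 (real (n + C)) ^ 2 * (real n / sqrt (\<epsilon> * real (card E)))} = 1"
proof (cases "1 < \<epsilon>")
  case True
  then show ?thesis by (simp add: outcome_conflict_tester_large_eps)
next
  case False
  have "2 \<le> n" using is_graph_two_le[OF assms(1,2)] .
  then obtain sp where out: "outcome conflict_tester n E C f \<epsilon> =
      map_pmf (\<lambda>\<sigma>. (\<not> (\<exists>j < length \<sigma>. closes_conflict (sample_size n (card E) \<epsilon>) f E \<sigma> j), sp \<sigma>))
        (pmf_of_set (permutations_of_set {0..<n}))"
    and sp: "\<And>\<sigma>. sp \<sigma> \<le> 1 + word_size n C + 2 * word_size n C * sample_size n (card E) \<epsilon>"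
    using outcome_conflict_tester[of \<epsilon> n f C E] False assms(3) by auto
  have "real (sp \<sigma>) \<le> 11 * log 2 (real (n + C)) ^ 2 * (real n / sqrt (\<epsilon> * real (card E)))" for \<sigma>
  proof -
    have "real (sp \<sigma>) \<le> real (1 + word_size n C + 2 * word_size n C * sample_size n (card E) \<epsilon>)"
      using sp[of \<sigma>] by (simp only: of_nat_le_iff)
    also have "\<dots> \<le> 11 * log 2 (real (n + C)) ^ 2 * (real n / sqrt (\<epsilon> * real (card E)))"
      using False by (intro tester_memory_bound \<open>2 \<le> n\<close> assms(2,4) is_graph_card_le[OF assms(1)]) simp
    finally show ?thesis .
  qed
  then show ?thesis
    unfolding out by (simp add: measure_pmf.prob_eq_1 AE_measure_pmf_iff)
qed

theorem theorem4p3: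
  "\<exists>A :: stream_alg. \<exists>c > (0::real). \<exists>K :: real. \<exists>k :: nat.
     \<forall>n E C f \<epsilon>.
       is_graph n E \<and> card E \<ge> 1 \<and> (\<forall>v < n. f v < C) \<and> \<epsilon> > 0 \<longrightarrow>
         (valid_coloring f E \<longrightarrow>
            measure_pmf.prob (outcome A n E C f \<epsilon>) {x. fst x = True} \<ge> 1 - 1 / real n powr c)
       \<and> (far_from_valid \<epsilon> f E \<longrightarrow>
            measure_pmf.prob (outcome A n E C f \<epsilon>) {x. fst x = False} \<ge> 1 - 1 / real n powr c)
       \<and> measure_pmf.prob (outcome A n E C f \<epsilon>)
            {x. real (snd x) \<le> K * (log 2 (real (n + C))) ^ k * (real n / sqrt (\<epsilon> * real (card E)))}
           \<ge> 1 - 1 / real n powr c"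
proof (rule exI[of _ conflict_tester], rule exI[of _ 1],
    intro exI[of _ "11::real"] exI[of _ "2::nat"] conjI allI impI)
  fix n :: nat and E :: "nat set set" and C :: nat and f :: "nat \<Rightarrow> nat" and \<epsilon> :: real
  assume "is_graph n E \<and> 1 \<le> card E \<and> (\<forall>v < n. f v < C) \<and> 0 < \<epsilon>"
  then have G: "is_graph n E" "1 \<le> card E" "\<forall>v < n. f v < C" "0 < \<epsilon>"
    by auto
  show "1 - 1 / real n powr 1 \<le> measure_pmf.prob (outcome conflict_tester n E C f \<epsilon>) {x. fst x = True}"
    if "valid_coloring f E"
    using conflict_tester_accepts_valid[OF G(1-3) that] by simp
  show "1 - 1 / real n powr 1 \<le> measure_pmf.prob (outcome conflict_tester n E C f \<epsilon>) {x. fst x = False}"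
    if "far_from_valid \<epsilon> f E"
    using conflict_tester_rejects_far[OF G that] by simp
  show "1 - 1 / real n powr 1 \<le> measure_pmf.prob (outcome conflict_tester n E C f \<epsilon>)
      {x. real (snd x) \<le> 11 * log 2 (real (n + C)) ^ 2 * (real n / sqrt (\<epsilon> * real (card E)))}"
    using conflict_tester_space[OF G] by simp
qed simp

end
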